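(* Let $L\ge 2$ and let $M_1,\dots,M_L$ be pairwise distinct positive integers. Let $N$ be an integer with $0\le N<\operatorname{lcm}(M_1,\dots,M_L)$, and for $1\le i\le L$ let $r_i\in\{0,\dots,M_i-1\}$ be the remainder of $N$ modulo $M_i$ and $n_i=(N-r_i)/M_i$. Let $\tilde r_1,\dots,\tilde r_L$ be integers with $0\le\tilde r_i\le M_i-1$ and $|\tilde r_i-r_i|\le\tau$ for all $i$, where $$\tau<\max_{1\le i\le L}\ \min_{1\le j\le L,\ j\ne i}\frac{\gcd(M_i,M_j)}{4}.$$ Let $k$ be an index attaining this maximum, i.e. $\min_{j\ne k}\gcd(M_k,M_j)=\max_i\min_{j\ne i}\gcd(M_i,M_j)$. Then the single-stage algorithm (described in the context) run on the moduli $M_1,\dots,M_L$ with reference index $k$ and inputs $\tilde r_1,\dots,\tilde r_L$ outputs $\hat n_i=n_i$ for all $1\le i\le L$.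
   Context: For $x\in\mathbb R$, $[x]$ denotes the unique integer with $-1/2\le x-[x]<1/2$. Single-stage algorithm: let $P_1,\dots,P_m$ ($m\ge2$) be pairwise distinct positive integers, $k\in\{1,\dots,m\}$ a reference index, and $x_1,\dots,x_m$ integers. For each $i\ne k$ put $m_{ki}=\gcd(P_k,P_i)$, $\Gamma_{ki}=P_k/m_{ki}$, $\Gamma_{ik}=P_i/m_{ki}$, $\hat q_{ik}=[(x_i-x_k)/m_{ki}]$; let $\bar\Gamma_{ki}$ be a multiplicative inverse of $\Gamma_{ki}$ modulo $\Gamma_{ik}$, and let $\hat\xi_{ik}\in\{0,\dots,\Gamma_{ik}-1\}$ with $\hat\xi_{ik}\equiv\hat q_{ik}\bar\Gamma_{ki}\pmod{\Gamma_{ik}}$. Let $\hat n_k$ be the least nonnegative integer $y$ with $y\equiv\hat\xi_{ik}\pmod{\Gamma_{ik}}$ for all $i\ne k$ (if no such $y$ exists the algorithm fails). For $i\ne k$ set $\hat n_i=(\hat n_k\Gamma_{ki}-\hat q_{ik})/\Gamma_{ik}$. Outputs: $\hat n_1,\dots,\hat n_m$ and the estimate $[\frac1m\sum_{i=1}^m(\hat n_iP_i+x_i)]$. *)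

theory Defs
  imports Complex_Main "HOL-Number_Theory.Cong"
begin

definition rnd :: "real \<Rightarrow> int" where
  "rnd x = (THE z::int. - 1/2 \<le> x - of_int z \<and> x - of_int z < 1/2)"

text \<open>Returns None if the system of congruences for the
  reference folding integer has no nonnegative solution; otherwise returns the
  estimated folding integers (meaningful for indices in 1..m).\<close>
definition single_stage ::
  "nat \<Rightarrow> (nat \<Rightarrow> int) \<Rightarrow> nat \<Rightarrow> (nat \<Rightarrow> int) \<Rightarrow> (nat \<Rightarrow> int) option" where
  "single_stage m P k x =
    (let mm = (\<lambda>i. gcd (P k) (P i));
         Gki = (\<lambda>i. P k div mm i);
         Gik = (\<lambda>i. P i div mm i);
         q = (\<lambda>i. rnd (of_int (x i - x k) / of_int (mm i)));
         Gbar = (\<lambda>i. SOME g::int. [g * Gki i = 1] (mod Gik i));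
         xi = (\<lambda>i. (q i * Gbar i) mod Gik i);
         S = {y::int. 0 \<le> y \<and> (\<forall>i\<in>{1..m} - {k}. [y = xi i] (mod Gik i))}
     in if S = {} then None
        else (let nk = (LEAST y. y \<in> S)
              in Some (\<lambda>i. if i = k then nk else (nk * Gki i - q i) div Gik i)))"

end

(*
  For i \<noteq> k write N = n_k P_k + r_k = n_i P_i + r_i and m_ki = gcd P_k P_i.  Then
  (x_i - x_k) / m_ki differs from n_k \<Gamma>_ki - n_i \<Gamma>_ik by at most 2\<tau> / m_ki < 1/2, so rounding
  recovers q_ik = n_k \<Gamma>_ki - n_i \<Gamma>_ik exactly, and n_k solves every congruence
  y = q_ik \<Gamma>'_ki (mod \<Gamma>_ik) of the algorithm.  As P_i divides P_k \<Gamma>_ik, the bound N < lcm P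
  forces n_k < lcm \<Gamma>_ik, so n_k is the least nonnegative solution, and n_i = (n_k \<Gamma>_ki - q_ik) / \<Gamma>_ik.
  The max-min choice of k turns the hypothesis on \<tau> into 4\<tau> < m_kj for every j \<noteq> k.
*)
theory Submission
  imports Defs
begin

lemma rnd_eqI:
  assumes "- 1/2 \<le> x - of_int z" and "x - of_int z < 1/2"
  shows "rnd x = z"
  unfolding rnd_def
proof (rule the_equality)
  fix w :: int
  assume "- 1/2 \<le> x - of_int w \<and> x - of_int w < 1/2"
  with assms have "real_of_int (z - w) < 1" and "real_of_int (z - w) > - 1"
    by auto
  then show "w = z"
    by linarith
qed (use assms in simp)

lemma rnd_div_add_small:
  fixes d z e :: int
  assumes "2 * \<bar>e\<bar> < d"
  shows "rnd (of_int (d * z + e) / of_int d) = z"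
proof (rule rnd_eqI)
  have d: "real_of_int d > 0"
    using assms by linarith
  have "of_int (d * z + e) / of_int d - of_int z = real_of_int e / real_of_int d"
    using d by (simp add: field_simps)
  moreover have "2 * \<bar>real_of_int e\<bar> < real_of_int d"
    using assms by linarith
  ultimately show "- 1/2 \<le> real_of_int (d * z + e) / of_int d - of_int z"
    and "real_of_int (d * z + e) / of_int d - of_int z < 1/2"
    using d by (auto simp: field_simps abs_less_iff)
qed

lemma rnd_remainder_difference:
  fixes a b N xa xb :: int and \<tau> :: real
  assumes "\<bar>real_of_int (xa - N mod a)\<bar> \<le> \<tau>" and "\<bar>real_of_int (xb - N mod b)\<bar> \<le> \<tau>"
    and "4 * \<tau> < real_of_int (gcd a b)"
  shows "rnd (of_int (xb - xa) / of_int (gcd a b))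
           = N div a * (a div gcd a b) - N div b * (b div gcd a b)"
proof -
  define d where "d = gcd a b"
  define e where "e = (xb - N mod b) - (xa - N mod a)"
  have "d * (a div d) = a" and "d * (b div d) = b"
    unfolding d_def by simp_all
  then have "d * (N div a * (a div d) - N div b * (b div d)) + e = N div a * a - N div b * b + e"
    by (metis mult.left_commute right_diff_distrib)
  also have "\<dots> = xb - xa"
    unfolding e_def using div_mult_mod_eq[of N a] div_mult_mod_eq[of N b] by linarith
  finally have diff: "xb - xa = d * (N div a * (a div d) - N div b * (b div d)) + e" ..
  have small: "2 * \<bar>e\<bar> < d"
  proof -
    have "\<bar>real_of_int e\<bar> \<le> \<bar>real_of_int (xb - N mod b)\<bar> + \<bar>real_of_int (xa - N mod a)\<bar>"
      unfolding e_def by (metis abs_triangle_ineq4 of_int_diff)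
    then have "2 * \<bar>real_of_int e\<bar> < real_of_int d"
      using assms unfolding d_def by linarith
    then show ?thesis
      by linarith
  qed
  show ?thesis
    unfolding d_def[symmetric] diff using small by (rule rnd_div_add_small)
qed

lemma cong_mult_SOME_inverse:
  fixes a b c n :: int
  assumes "coprime a b"
  shows "[(n * a - c * b) * (SOME g. [g * a = 1] (mod b)) mod b = n] (mod b)"
proof -
  define g where "g = (SOME g. [g * a = 1] (mod b))"
  have "\<exists>g. [g * a = 1] (mod b)"
    using cong_solve_coprime_int[OF assms] by (metis mult.commute)
  then have g: "[g * a = 1] (mod b)"
    unfolding g_def by (rule someI_ex)
  have "[(n * a - c * b) * g mod b = n * a * g - c * b * g] (mod b)"
    by (simp add: cong_def algebra_simps)
  also have "[n * a * g - c * b * g = n * (g * a)] (mod b)"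
    by (simp add: cong_iff_dvd_diff algebra_simps)
  also have "[n * (g * a) = n * 1] (mod b)"
    by (intro cong_mult cong_refl g)
  finally show ?thesis
    unfolding g_def by simp
qed

lemma Least_nonneg_cong_eq:
  fixes n :: int and G :: "'a \<Rightarrow> int"
  assumes "0 \<le> n" and "n < Lcm (G ` A)"
  shows "(LEAST y. 0 \<le> y \<and> (\<forall>i\<in>A. [y = n] (mod G i))) = n"
proof (rule Least_equality)
  fix y
  assume y: "0 \<le> y \<and> (\<forall>i\<in>A. [y = n] (mod G i))"
  then have "Lcm (G ` A) dvd y - n"
    by (auto simp: Lcm_dvd_iff cong_iff_dvd_diff)
  then have "Lcm (G ` A) dvd n - y"
    by (simp add: dvd_diff_commute)
  show "n \<le> y"
  proof (rule ccontr)
    assume "\<not> n \<le> y"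
    with \<open>Lcm (G ` A) dvd n - y\<close> have "Lcm (G ` A) \<le> n - y"
      by (intro zdvd_imp_le) auto
    with assms y show False
      by linarith
  qed
qed (use assms in simp)

lemma Lcm_dvd_mult_Lcm_cofactors:
  fixes P :: "'a \<Rightarrow> int"
  assumes "k \<in> I"
  shows "Lcm (P ` I) dvd P k * Lcm ((\<lambda>i. P i div gcd (P k) (P i)) ` (I - {k}))"
proof (rule Lcm_least)
  fix b
  assume "b \<in> P ` I"
  then obtain i where i: "i \<in> I" and b: "b = P i"
    by blast
  show "b dvd P k * Lcm ((\<lambda>i. P i div gcd (P k) (P i)) ` (I - {k}))"
  proof (cases "i = k")
    case False
    have "P i dvd P k * (P i div gcd (P k) (P i))"
      by (metis dvd_div_mult dvd_triv_right gcd_dvd1 gcd_dvd2 mult.commute)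
    moreover have "P i div gcd (P k) (P i) dvd Lcm ((\<lambda>i. P i div gcd (P k) (P i)) ` (I - {k}))"
      using i False by (intro dvd_Lcm) auto
    ultimately show ?thesis
      unfolding b by (meson dvd_trans mult_dvd_mono dvd_refl)
  qed (simp add: b)
qed

lemma div_less_Lcm_cofactors:
  fixes P :: "'a \<Rightarrow> int" and N :: int
  assumes "finite I" and "\<forall>i\<in>I. P i > 0" and "k \<in> I" and "0 \<le> N" and "N < Lcm (P ` I)"
  shows "N div P k < Lcm ((\<lambda>i. P i div gcd (P k) (P i)) ` (I - {k}))"
proof -
  define G where "G = Lcm ((\<lambda>i. P i div gcd (P k) (P i)) ` (I - {k}))"
  have Pk: "P k > 0"
    using assms(2,3) by blast
  have dvd: "Lcm (P ` I) dvd P k * G"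
    unfolding G_def using assms(3) by (rule Lcm_dvd_mult_Lcm_cofactors)
  have "P i div gcd (P k) (P i) \<noteq> 0" if "i \<in> I" for i
    using assms(2) that by (auto simp: dvd_div_eq_0_iff)
  then have "G \<noteq> 0"
    unfolding G_def using assms(1) by (subst Lcm_0_iff) auto
  then have "G > 0"
    unfolding G_def using Lcm_int_greater_eq_0 by (simp add: less_le)
  then have "Lcm (P ` I) \<le> P k * G"
    using dvd Pk by (intro zdvd_imp_le) auto
  moreover have "P k * (N div P k) \<le> N"
    using mult_div_mod_eq[of "P k" N] pos_mod_sign[OF Pk, of N] by linarith
  ultimately have "P k * (N div P k) < P k * G"
    using assms(5) by linarith
  then show ?thesis
    unfolding G_def using Pk by simp
qed

theorem single_stage_recovers_folding_integers:
  fixes m k :: nat and P x :: "nat \<Rightarrow> int" and N :: int and \<tau> :: real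
  assumes k: "k \<in> {1..m}" and pos: "\<forall>i\<in>{1..m}. P i > 0"
    and N: "0 \<le> N" "N < Lcm (P ` {1..m})"
    and err: "\<forall>i\<in>{1..m}. \<bar>real_of_int (x i - N mod P i)\<bar> \<le> \<tau>"
    and gcd: "\<forall>j\<in>{1..m} - {k}. 4 * \<tau> < real_of_int (gcd (P k) (P j))"
  shows "\<exists>nh. single_stage m P k x = Some nh \<and> (\<forall>i\<in>{1..m}. nh i = N div P i)"
proof -
  define A where "A = {1..m} - {k}"
  define Gki where "Gki = (\<lambda>i. P k div gcd (P k) (P i))"
  define Gik where "Gik = (\<lambda>i. P i div gcd (P k) (P i))"
  define q where "q = (\<lambda>i. rnd (of_int (x i - x k) / of_int (gcd (P k) (P i))))"
  define xi where "xi = (\<lambda>i. (q i * (SOME g. [g * Gki i = 1] (mod Gik i))) mod Gik i)"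
  define S where "S = {y. 0 \<le> y \<and> (\<forall>i\<in>A. [y = xi i] (mod Gik i))}"
  define n where "n = (\<lambda>i. N div P i)"
  have unfold: "single_stage m P k x = (if S = {} then None
      else Some (\<lambda>i. if i = k then LEAST y. y \<in> S else ((LEAST y. y \<in> S) * Gki i - q i) div Gik i))"
    unfolding single_stage_def Let_def S_def xi_def q_def Gik_def Gki_def A_def by (rule refl)
  have Pk: "P k > 0"
    using k pos by blast
  have Gik_pos: "Gik i > 0" if "i \<in> A" for i
  proof -
    have "P i > 0"
      using pos that unfolding A_def by blast
    then show ?thesis
      unfolding Gik_def by (simp add: pos_imp_zdiv_pos_iff zdvd_imp_le)
  qed
  have q: "q i = n k * Gki i - n i * Gik i" if "i \<in> A" for i
    unfolding q_def n_def Gki_def Gik_def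
    using that err k gcd unfolding A_def by (intro rnd_remainder_difference[where \<tau> = \<tau>]) auto
  have xi: "[xi i = n k] (mod Gik i)" if "i \<in> A" for i
    unfolding xi_def q[OF that] unfolding Gki_def Gik_def
    using Pk by (intro cong_mult_SOME_inverse div_gcd_coprime) simp
  have S: "S = {y. 0 \<le> y \<and> (\<forall>i\<in>A. [y = n k] (mod Gik i))}"
    unfolding S_def using xi by (meson cong_sym cong_trans)
  have "0 \<le> n k"
    unfolding n_def using N(1) Pk by (simp add: pos_imp_zdiv_nonneg_iff)
  moreover have "n k < Lcm (Gik ` A)"
    unfolding n_def Gik_def A_def using k pos N by (intro div_less_Lcm_cofactors) auto
  ultimately have least: "(LEAST y. y \<in> S) = n k" and "n k \<in> S"
    unfolding S by (simp_all add: Least_nonneg_cong_eq)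
  have "(n k * Gki i - q i) div Gik i = n i" if "i \<in> A" for i
    using q[OF that] Gik_pos[OF that] by simp
  with \<open>n k \<in> S\<close> show ?thesis
    unfolding unfold least A_def n_def by auto
qed

lemma quarter_less_of_Max_Min:
  fixes g :: "'a \<Rightarrow> 'a \<Rightarrow> int" and \<tau> :: real
  assumes "finite I" and "\<forall>i\<in>I. I - {i} \<noteq> {}" and "k \<in> I"
    and "Min ((\<lambda>j. g k j) ` (I - {k})) = Max ((\<lambda>i. Min ((\<lambda>j. g i j) ` (I - {i}))) ` I)"
    and "\<tau> < Max ((\<lambda>i. Min ((\<lambda>j. real_of_int (g i j) / 4) ` (I - {i}))) ` I)"
    and "j \<in> I - {k}"
  shows "4 * \<tau> < real_of_int (g k j)"
proof -
  define f :: "int \<Rightarrow> real" where "f z = real_of_int z / 4" for z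
  have "mono f"
    unfolding f_def by (rule monoI) simp
  have "Min ((\<lambda>j. real_of_int (g i j) / 4) ` (I - {i})) = f (Min (g i ` (I - {i})))"
    if "i \<in> I" for i
    using mono_Min_commute[OF \<open>mono f\<close>, of "g i ` (I - {i})"] assms(1,2) that
    unfolding f_def by (simp add: image_image)
  then have "(\<lambda>i. Min ((\<lambda>j. real_of_int (g i j) / 4) ` (I - {i}))) ` I
      = f ` (\<lambda>i. Min (g i ` (I - {i}))) ` I"
    unfolding image_image by (rule image_cong[OF refl])
  moreover have "(\<lambda>i. Min (g i ` (I - {i}))) ` I \<noteq> {}"
    using assms(3) by blast
  ultimately have "Max ((\<lambda>i. Min ((\<lambda>j. real_of_int (g i j) / 4) ` (I - {i}))) ` I)
      = f (Max ((\<lambda>i. Min (g i ` (I - {i}))) ` I))"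
    using mono_Max_commute[OF \<open>mono f\<close>] assms(1) by simp
  also have "\<dots> = f (Min (g k ` (I - {k})))"
    using assms(4) by simp
  also have "\<dots> \<le> f (g k j)"
    using \<open>mono f\<close> assms(1,6) by (simp add: monoD)
  finally show ?thesis
    using assms(5) unfolding f_def by simp
qed

theorem corollary1:
  fixes L :: nat and M :: "nat \<Rightarrow> int" and N :: int and rt :: "nat \<Rightarrow> int"
    and \<tau> :: real and k :: nat
  assumes "L \<ge> 2"
    and "\<forall>i\<in>{1..L}. M i > 0"
    and "inj_on M {1..L}"
    and "0 \<le> N" and "N < Lcm (M ` {1..L})"
    and "\<forall>i\<in>{1..L}. 0 \<le> rt i \<and> rt i \<le> M i - 1"
    and "\<forall>i\<in>{1..L}. \<bar>real_of_int (rt i - N mod M i)\<bar> \<le> \<tau>"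
    and "\<tau> < Max ((\<lambda>i. Min ((\<lambda>j. real_of_int (gcd (M i) (M j)) / 4) ` ({1..L} - {i}))) ` {1..L})"
    and "k \<in> {1..L}"
    and "Min ((\<lambda>j. gcd (M k) (M j)) ` ({1..L} - {k}))
         = Max ((\<lambda>i. Min ((\<lambda>j. gcd (M i) (M j)) ` ({1..L} - {i}))) ` {1..L})"
  shows "\<exists>nh. single_stage L M k rt = Some nh \<and>
           (\<forall>i\<in>{1..L}. nh i = (N - N mod M i) div M i)"
proof -
  have "{1..L} - {i} \<noteq> {}" for i
  proof -
    have "(if i = 1 then 2 else 1) \<in> {1..L} - {i}"
      using assms(1) by auto
    then show ?thesis
      by blast
  qed
  then have "4 * \<tau> < real_of_int (gcd (M k) (M j))" if "j \<in> {1..L} - {k}" for j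
    using assms(8-10) that
    by (intro quarter_less_of_Max_Min[where g = "\<lambda>i j. gcd (M i) (M j)"]) auto
  then obtain nh where "single_stage L M k rt = Some nh" and nh: "\<forall>i\<in>{1..L}. nh i = N div M i"
    using single_stage_recovers_folding_integers[of k L M N rt \<tau>] assms(2,4,5,7,9) by blast
  moreover have "nh i = (N - N mod M i) div M i" if "i \<in> {1..L}" for i
    using nh assms(2) that by (simp add: minus_mod_eq_mult_div)
  ultimately show ?thesis
    by blast
qed

end
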